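(* Let $0<\alpha<1$ and $\gamma>0$. Consider the heterogeneous Galton–Watson process $\{Z_t\}_{t\ge 0}$ with $Z_0=1$, in which each individual of generation $t$ independently has either $2$ offspring, with probability $\alpha/(1+t)^{\gamma}$, or $0$ offspring, with probability $1-\alpha/(1+t)^{\gamma}$. Let $T_{ex}=\min\{t: Z_t=0\}$ be the extinction time. Then there exists a constant $C_0>0$, depending only on $\alpha$ and $\gamma$, such that for every integer $t\ge 1$, $$\mathbb{P}(T_{ex}>t) < C_0\left(\frac{t^{\gamma}}{2\alpha\, e^{\gamma}}\right)^{-t}.$$
   Context: This Galton–Watson process models the tree-generating prior of Bayesian CART/BART. In that prior, a node at depth $t$ of a binary tree is split into two children with probability $\alpha/(1+t)^\gamma$, and the root has depth $0$. The variable $Z_t$ is the number of nodes at depth $t$. *)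

theory Defs
  imports "HOL-Probability.Probability"
begin

definition split_prob :: "real \<Rightarrow> real \<Rightarrow> nat \<Rightarrow> real" where
  "split_prob \<alpha> \<gamma> t = \<alpha> / (1 + real t) powr \<gamma>"

text \<open>Joint law of the path (Z_0, ..., Z_t) as a list of length t+1.
  Given Z_t = n, each of the n individuals independently has 2 offspring with
  probability split_prob, else 0; so Z_(t+1) = 2 * Binomial(n, split_prob t).\<close>
primrec gw_path :: "real \<Rightarrow> real \<Rightarrow> nat \<Rightarrow> nat list pmf" where
  "gw_path \<alpha> \<gamma> 0 = return_pmf [1]"
| "gw_path \<alpha> \<gamma> (Suc t) =
     bind_pmf (gw_path \<alpha> \<gamma> t)
       (\<lambda>xs. map_pmf (\<lambda>k. xs @ [2 * k]) (binomial_pmf (last xs) (split_prob \<alpha> \<gamma> t)))"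

definition survival_prob :: "real \<Rightarrow> real \<Rightarrow> nat \<Rightarrow> real" where
  "survival_prob \<alpha> \<gamma> t =
     measure_pmf.prob (gw_path \<alpha> \<gamma> t) {xs. \<forall>s\<le>t. xs ! s \<noteq> 0}"

end

theory Submission
  imports Defs
begin

text \<open>On survival up to time t we have Z_t \<ge> 1, so Markov's inequality bounds the survival
  probability by E Z_t = \<Prod>s<t. 2\<alpha>/(1+s)^\<gamma> = (2\<alpha>)^t / (t!)^\<gamma>. The elementary bound
  t^t \<le> e^t t!, read off the exponential series, turns this into (2\<alpha> e^\<gamma> / t^\<gamma>)^t; any
  C0 > 1 then gives the strict inequality.\<close>

lemma nn_integral_binomial_pmf_real:
  assumes p: "p \<in> {0..1}"
  shows "nn_integral (measure_pmf (binomial_pmf n p)) of_nat = ennreal (real n * p)"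
proof (induction n)
  case 0
  then show ?case using p by (simp add: binomial_pmf_0)
next
  case (Suc n)
  have "nn_integral (measure_pmf (binomial_pmf (Suc n) p)) of_nat
      = (\<integral>\<^sup>+b. of_bool b + ennreal (real n * p) \<partial>bernoulli_pmf p)"
    using p by (simp add: binomial_pmf_Suc nn_integral_add Suc)
  also have "\<dots> = ennreal (p * (1 + real n * p) + (1 - p) * (real n * p))"
    using p by (simp add: ennreal_mult' mult.commute)
  also have "\<dots> = ennreal (real (Suc n) * p)"
    by (simp add: algebra_simps)
  finally show ?case .
qed

lemma power_le_exp_mult_fact:
  fixes x :: real
  assumes "0 \<le> x"
  shows "x ^ n \<le> exp x * fact n"
proof -
  have "x ^ n / fact n \<le> (\<Sum>k. x ^ k / fact k)"
    using assms summable_exp_generic[of x]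
    by (intro sum_le_suminf[where I = "{n}", simplified]) (auto simp: divide_inverse ac_simps)
  also have "\<dots> = exp x"
    by (simp add: exp_def divide_inverse ac_simps)
  finally show ?thesis
    by (simp add: divide_le_eq ac_simps)
qed

lemma fact_powr_lower_bound:
  fixes \<gamma> :: real
  assumes "0 \<le> \<gamma>"
  shows "(real n powr \<gamma> / exp \<gamma>) ^ n \<le> fact n powr \<gamma>"
proof (cases "n = 0")
  case False
  then have "(real n powr \<gamma> / exp \<gamma>) ^ n = (real n ^ n / exp (real n)) powr \<gamma>"
    by (simp add: power_divide powr_divide powr_power powr_realpow[symmetric] powr_powr
        exp_of_nat_mult[symmetric] powr_def exp_diff[symmetric] right_diff_distrib ac_simps)
  also have "\<dots> \<le> fact n powr \<gamma>"
    using assms power_le_exp_mult_fact[of "real n" n]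
    by (intro powr_mono2) (auto simp: divide_le_eq ac_simps)
  finally show ?thesis .
qed simp

lemma length_gw_path: "xs \<in> set_pmf (gw_path \<alpha> \<gamma> t) \<Longrightarrow> length xs = Suc t"
  by (induction t arbitrary: xs) auto

lemma split_prob_in_unit_interval:
  assumes "0 \<le> \<alpha>" "\<alpha> \<le> 1" "0 \<le> \<gamma>"
  shows "split_prob \<alpha> \<gamma> t \<in> {0..1}"
proof -
  have "1 \<le> (1 + real t) powr \<gamma>"
    using assms by (simp add: ge_one_powr_ge_zero)
  then show ?thesis
    using assms by (auto simp: split_prob_def divide_le_eq)
qed

lemma nn_integral_last_gw_path:
  assumes "0 \<le> \<alpha>" "\<alpha> \<le> 1" "0 \<le> \<gamma>"
  shows "nn_integral (measure_pmf (gw_path \<alpha> \<gamma> t)) (\<lambda>xs. of_nat (last xs))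
           = ennreal (\<Prod>s<t. 2 * split_prob \<alpha> \<gamma> s)"
proof (induction t)
  case (Suc t)
  define p where "p = split_prob \<alpha> \<gamma> t"
  have p: "p \<in> {0..1}"
    unfolding p_def using assms by (rule split_prob_in_unit_interval)
  have "nn_integral (measure_pmf (gw_path \<alpha> \<gamma> (Suc t))) (\<lambda>xs. of_nat (last xs))
      = (\<integral>\<^sup>+xs. 2 * nn_integral (measure_pmf (binomial_pmf (last xs) p)) of_nat \<partial>gw_path \<alpha> \<gamma> t)"
    by (simp add: p_def nn_integral_cmult)
  also have "\<dots> = (\<integral>\<^sup>+xs. ennreal (2 * p) * of_nat (last xs) \<partial>gw_path \<alpha> \<gamma> t)"
    using p by (simp add: nn_integral_binomial_pmf_real ennreal_mult' ennreal_of_nat_eq_real_of_nat ac_simps)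
  also have "\<dots> = ennreal (2 * p) * ennreal (\<Prod>s<t. 2 * split_prob \<alpha> \<gamma> s)"
    by (simp add: nn_integral_cmult Suc)
  also have "\<dots> = ennreal (\<Prod>s<Suc t. 2 * split_prob \<alpha> \<gamma> s)"
    using p by (simp add: p_def ennreal_mult'[symmetric] ac_simps)
  finally show ?case .
qed simp

lemma survival_prob_le_prod_split_prob:
  assumes "0 \<le> \<alpha>" "\<alpha> \<le> 1" "0 \<le> \<gamma>"
  shows "survival_prob \<alpha> \<gamma> t \<le> (\<Prod>s<t. 2 * split_prob \<alpha> \<gamma> s)"
proof -
  let ?M = "gw_path \<alpha> \<gamma> t"
  let ?A = "{xs. \<forall>s\<le>t. xs ! s \<noteq> 0}"
  have "ennreal (survival_prob \<alpha> \<gamma> t) = (\<integral>\<^sup>+xs. indicator ?A xs \<partial>?M)"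
    by (simp add: survival_prob_def measure_pmf.emeasure_eq_measure)
  also have "\<dots> \<le> (\<integral>\<^sup>+xs. of_nat (last xs) \<partial>?M)"
  proof (intro nn_integral_mono_AE AE_pmfI)
    fix xs assume "xs \<in> set_pmf ?M"
    then have "last xs = xs ! t"
      using length_gw_path by (metis diff_Suc_1 last_conv_nth list.size(3) nat.distinct(1))
    then show "indicator ?A xs \<le> (of_nat (last xs) :: ennreal)"
      by (auto simp: indicator_def)
  qed
  also have "\<dots> = ennreal (\<Prod>s<t. 2 * split_prob \<alpha> \<gamma> s)"
    using assms by (rule nn_integral_last_gw_path)
  finally show ?thesis
    using assms split_prob_in_unit_interval by (simp add: prod_nonneg ennreal_le_iff)
qed

lemma prod_split_prob:
  "(\<Prod>s<t. 2 * split_prob \<alpha> \<gamma> s) = (2 * \<alpha>) ^ t / fact t powr \<gamma>"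
proof -
  have "(\<Prod>s<t. 1 + real s) = fact t"
    by (induction t) (auto simp: algebra_simps)
  then show ?thesis
    by (simp add: split_prob_def prod_dividef prod_powr_distrib[symmetric])
qed

theorem corollary1:
  fixes \<alpha> \<gamma> :: real
  assumes "0 < \<alpha>" and "\<alpha> < 1" and "0 < \<gamma>"
  shows "\<exists>C0 > 0. \<forall>t::nat. t \<ge> 1 \<longrightarrow>
           survival_prob \<alpha> \<gamma> t
             < C0 * ((real t powr \<gamma> / (2 * \<alpha> * exp \<gamma>)) powr (- real t))"
proof (intro exI[of _ 2] conjI allI impI)
  fix t :: nat assume "t \<ge> 1"
  define b where "b = real t powr \<gamma> / exp \<gamma>"
  have "b > 0"
    using \<open>t \<ge> 1\<close> by (simp add: b_def)
  have "survival_prob \<alpha> \<gamma> t \<le> (2 * \<alpha>) ^ t / fact t powr \<gamma>"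
    using survival_prob_le_prod_split_prob[of \<alpha> \<gamma> t] assms by (simp add: prod_split_prob)
  also have "\<dots> \<le> (2 * \<alpha>) ^ t / b ^ t"
    using assms \<open>b > 0\<close> fact_powr_lower_bound[of \<gamma> t]
    by (intro divide_left_mono) (auto simp: b_def)
  also have "\<dots> = (b / (2 * \<alpha>)) powr (- real t)"
    using assms \<open>b > 0\<close> by (simp add: powr_minus powr_realpow power_divide)
  also have "\<dots> < 2 * (b / (2 * \<alpha>)) powr (- real t)"
    using assms \<open>b > 0\<close> by simp
  finally show "survival_prob \<alpha> \<gamma> t < 2 * (real t powr \<gamma> / (2 * \<alpha> * exp \<gamma>)) powr (- real t)"
    by (simp add: b_def ac_simps)
qed simp

end
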